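(* For the Byzantine-tolerant algorithm described in the context, under the fair distributed daemon and any Byzantine behaviour: if $\gamma$ is a degree-stabilized configuration such that $I_\gamma$ is not a maximal independent set of the subgraph induced by $V_2\cup I_\gamma$, then within the round starting at $\gamma$ at least one of the following happens: (1) the rule Candidacy? is executed on a node of $V_1$; (2) a configuration $\gamma'$ with $I_\gamma\subsetneq I_{\gamma'}$ is reached; (3) a configuration $\gamma'$ in which Candidacy? is enabled on some node of $V_2$ is reached.
   Context: Network and model. $G=(V,E)$ is a finite simple undirected graph; $N(u)$ is the open neighbourhood of $u$, $N[u]=N(u)\cup\{u\}$, $\deg(u)=|N(u)|$. Nodes are anonymous. Each node holds local variables; a configuration is an assignment of values to all local variables. A rule "guard $\to$ command" is enabled on $u$ in $\gamma$ if its guard (a predicate on the variables of $u$ and its neighbours) holds; its command rewrites only $u$'s variables, possibly randomly. $u$ is activable if some rule is enabled on it. A transition $\gamma\xrightarrow{t}\gamma'$ is given by a nonempty set $t$ of moves $(u,r)$ with $r$ enabled on $u$ in $\gamma$, at most one per node, all executed simultaneously from the values in $\gamma$. An execution is a sequence of consecutive transitions chosen by a daemon. The fair distributed daemon may choose any such $t$, subject to fairness: no node may remain activable forever without being activated. Rounds. The rounds of an execution are consecutive segments of transitions: the first round starts at the beginning of the execution, each subsequent round starts immediately after the previous one ends, and the current round ends as soon as every node $u\in V$ has either been activated in at least one transition of the round or been non-activable in at least one configuration of the round. Byzantine nodes. A subset $B\subseteq V$ consists of Byzantine nodes: always activable and, when activated, they may set their variables to arbitrary values. $d(u,B)$ is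 the graph distance from $u$ to $B$ and $V_i=\{u\in V: d(u,B)>i\}$. Algorithm. Each node $u$ has variables $s_u\in\{\bot,\top\}$ and $x_u\in\mathbb{N}$; $Rand(q)$ returns $1$ with probability $q$, else $0$. Non-Byzantine nodes follow the rules: (Refresh) $x_u\neq \deg(u)\ \to\ x_u:=\deg(u)$. (Candidacy?) $x_u=\deg(u)\wedge s_u=\bot\wedge \forall v\in N(u),\ s_v=\bot\ \to$ if $Rand\big(\frac{1}{1+\max\{x_v: v\in N[u]\}}\big)=1$ then $s_u:=\top$. (Withdrawal) $x_u=\deg(u)\wedge s_u=\top\wedge \exists v\in N(u),\ s_v=\top\ \to\ s_u:=\bot$. For a configuration $\gamma$, $I_\gamma=\{u\in V_1: s_u^\gamma=\top \text{ and } \forall v\in N(u),\ s_v^\gamma=\bot\}$. $\gamma$ is degree-stabilized if $x_u^\gamma=\deg(u)$ for every non-Byzantine node $u$. *)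

theory Defs
  imports Complex_Main
begin

definition simple_graph :: "'v set \<Rightarrow> ('v \<Rightarrow> 'v \<Rightarrow> bool) \<Rightarrow> bool" where
  "simple_graph V E \<longleftrightarrow> finite V \<and> (\<forall>u v. E u v \<longrightarrow> u \<in> V \<and> v \<in> V)
     \<and> (\<forall>u v. E u v \<longrightarrow> E v u) \<and> (\<forall>u. \<not> E u u)"

definition nbrs :: "('v \<Rightarrow> 'v \<Rightarrow> bool) \<Rightarrow> 'v \<Rightarrow> 'v set" where
  "nbrs E u = {v. E u v}"

definition deg :: "('v \<Rightarrow> 'v \<Rightarrow> bool) \<Rightarrow> 'v \<Rightarrow> nat" where
  "deg E u = card (nbrs E u)"

definition edge_rel :: "('v \<Rightarrow> 'v \<Rightarrow> bool) \<Rightarrow> ('v \<times> 'v) set" where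
  "edge_rel E = {(u, v). E u v}"

(* V_i = { u in V : d(u,B) > i }, i.e. no Byzantine node at distance \<le> i *)
definition Vdist :: "'v set \<Rightarrow> ('v \<Rightarrow> 'v \<Rightarrow> bool) \<Rightarrow> 'v set \<Rightarrow> nat \<Rightarrow> 'v set" where
  "Vdist V E B i = {u \<in> V. \<forall>b\<in>B. \<forall>j\<le>i. (u, b) \<notin> (edge_rel E) ^^ j}"

definition independent :: "('v \<Rightarrow> 'v \<Rightarrow> bool) \<Rightarrow> 'v set \<Rightarrow> bool" where
  "independent E I \<longleftrightarrow> (\<forall>u\<in>I. \<forall>v\<in>I. \<not> E u v)"

definition maximal_independent_set :: "('v \<Rightarrow> 'v \<Rightarrow> bool) \<Rightarrow> 'v set \<Rightarrow> 'v set \<Rightarrow> bool" where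
  "maximal_independent_set E S I \<longleftrightarrow> I \<subseteq> S \<and> independent E I
     \<and> (\<forall>J. I \<subset> J \<and> J \<subseteq> S \<longrightarrow> \<not> independent E J)"

(* s_u = True means top, False means bottom *)
record 'v config =
  sv :: "'v \<Rightarrow> bool"
  xv :: "'v \<Rightarrow> nat"

datatype rule = Refresh | Candidacy | Withdrawal | ByzMove

definition enabled :: "('v \<Rightarrow> 'v \<Rightarrow> bool) \<Rightarrow> 'v set \<Rightarrow> 'v config \<Rightarrow> 'v \<Rightarrow> rule \<Rightarrow> bool" where
  "enabled E B c u r =
    (if u \<in> B then r = ByzMove else
     (case r of
        Refresh \<Rightarrow> xv c u \<noteq> deg E u
      | Candidacy \<Rightarrow> xv c u = deg E u \<and> \<not> sv c u \<and> (\<forall>v. E u v \<longrightarrow> \<not> sv c v)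
      | Withdrawal \<Rightarrow> xv c u = deg E u \<and> sv c u \<and> (\<exists>v. E u v \<and> sv c v)
      | ByzMove \<Rightarrow> False))"

definition activable :: "('v \<Rightarrow> 'v \<Rightarrow> bool) \<Rightarrow> 'v set \<Rightarrow> 'v config \<Rightarrow> 'v \<Rightarrow> bool" where
  "activable E B c u \<longleftrightarrow> (\<exists>r. enabled E B c u r)"

(* success probability of Rand in Candidacy? *)
definition cand_prob :: "('v \<Rightarrow> 'v \<Rightarrow> bool) \<Rightarrow> 'v config \<Rightarrow> 'v \<Rightarrow> real" where
  "cand_prob E c u = 1 / (1 + real (Max (xv c ` insert u (nbrs E u))))"

(* one transition c --T--> c'. The random outcome of Candidacy? is modelled by
   allowing every outcome of positive probability. *)
definition step :: "'v set \<Rightarrow> ('v \<Rightarrow> 'v \<Rightarrow> bool) \<Rightarrow> 'v set \<Rightarrow> 'v config \<Rightarrow> ('v \<times> rule) set \<Rightarrow> 'v config \<Rightarrow> bool" where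
  "step V E B c T c' \<longleftrightarrow>
     T \<noteq> {} \<and>
     (\<forall>(u, r)\<in>T. u \<in> V \<and> enabled E B c u r) \<and>
     (\<forall>u r r'. (u, r) \<in> T \<and> (u, r') \<in> T \<longrightarrow> r = r') \<and>
     (\<forall>u. (\<forall>r. (u, r) \<notin> T) \<longrightarrow> sv c' u = sv c u \<and> xv c' u = xv c u) \<and>
     (\<forall>u. (u, Refresh) \<in> T \<longrightarrow> xv c' u = deg E u \<and> sv c' u = sv c u) \<and>
     (\<forall>u. (u, Candidacy) \<in> T \<longrightarrow> xv c' u = xv c u \<and>
            (sv c' u \<or> (\<not> sv c' u \<and> cand_prob E c u < 1))) \<and>
     (\<forall>u. (u, Withdrawal) \<in> T \<longrightarrow> xv c' u = xv c u \<and> \<not> sv c' u)"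

definition round_complete :: "'v set \<Rightarrow> ('v \<Rightarrow> 'v \<Rightarrow> bool) \<Rightarrow> 'v set \<Rightarrow> (nat \<Rightarrow> 'v config) \<Rightarrow> (nat \<Rightarrow> ('v \<times> rule) set) \<Rightarrow> nat \<Rightarrow> bool" where
  "round_complete V E B c T n \<longleftrightarrow>
     (\<forall>u\<in>V. (\<exists>i<n. \<exists>r. (u, r) \<in> T i) \<or> (\<exists>i\<le>n. \<not> activable E B (c i) u))"

(* the first round consists exactly of transitions 0..n-1 *)
definition first_round_ends_at :: "'v set \<Rightarrow> ('v \<Rightarrow> 'v \<Rightarrow> bool) \<Rightarrow> 'v set \<Rightarrow> (nat \<Rightarrow> 'v config) \<Rightarrow> (nat \<Rightarrow> ('v \<times> rule) set) \<Rightarrow> nat \<Rightarrow> bool" where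
  "first_round_ends_at V E B c T n \<longleftrightarrow>
     round_complete V E B c T n \<and> (\<forall>m<n. \<not> round_complete V E B c T m)"

definition degree_stabilized :: "'v set \<Rightarrow> ('v \<Rightarrow> 'v \<Rightarrow> bool) \<Rightarrow> 'v set \<Rightarrow> 'v config \<Rightarrow> bool" where
  "degree_stabilized V E B c \<longleftrightarrow> (\<forall>u\<in>V - B. xv c u = deg E u)"

definition Iset :: "'v set \<Rightarrow> ('v \<Rightarrow> 'v \<Rightarrow> bool) \<Rightarrow> 'v set \<Rightarrow> 'v config \<Rightarrow> 'v set" where
  "Iset V E B c = {u \<in> Vdist V E B 1. sv c u \<and> (\<forall>v. E u v \<longrightarrow> \<not> sv c v)}"

end

theory Submission
  imports Defs
begin

text \<open>Suppose none of the three events happens. Degree stabilization is preserved, a node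
  of \<open>V\<^sub>1\<close> can only raise \<open>s\<close> by Candidacy?, and members of \<open>I\<close> are never disturbed; hence
  \<open>I\<close> stays constant and every node of \<open>V\<^sub>1\<close> that is \<open>\<top>\<close> at the end of the round was \<open>\<top>\<close>
  throughout it. Non-maximality yields \<open>w \<in> V\<^sub>2\<close> outside \<open>I\<close> and not adjacent to \<open>I\<close>. As
  Candidacy? is not enabled on \<open>w\<close> at the end of the round, \<open>w\<close> or a neighbour \<open>x\<close> is \<open>\<top>\<close>
  there, hence \<open>\<top>\<close> all round long. During the round \<open>x\<close> is activated or becomes
  non-activable; the only rule it could execute is Withdrawal, which would lower \<open>s\<^sub>x\<close>, so at
  some point Withdrawal is disabled on \<open>x\<close>, i.e. \<open>x \<in> I\<close> --- contradicting the choice of \<open>w\<close>.\<close>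

lemma Vdist_subset: "Vdist V E B i \<subseteq> V - B"
  unfolding Vdist_def by fastforce

lemma Vdist_not_Byzantine: "u \<in> Vdist V E B i \<Longrightarrow> u \<notin> B"
  unfolding Vdist_def by fastforce

lemma Vdist_antimono: "i \<le> j \<Longrightarrow> Vdist V E B j \<subseteq> Vdist V E B i"
  unfolding Vdist_def by auto

lemma Vdist_Suc_nbr:
  assumes "simple_graph V E" and "u \<in> Vdist V E B (Suc i)" and "E u v"
  shows "v \<in> Vdist V E B i"
proof -
  have "(v, b) \<notin> (edge_rel E) ^^ j" if "b \<in> B" "j \<le> i" for b j
  proof
    assume "(v, b) \<in> (edge_rel E) ^^ j"
    moreover have "(u, v) \<in> edge_rel E"
      using \<open>E u v\<close> by (simp add: edge_rel_def)
    ultimately have "(u, b) \<in> (edge_rel E) ^^ Suc j"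
      by (rule relpow_Suc_I2[rotated])
    moreover have "Suc j \<le> Suc i"
      using that(2) by simp
    ultimately show False
      using assms(2) that(1) unfolding Vdist_def by blast
  qed
  moreover have "v \<in> V"
    using assms(1,3) unfolding simple_graph_def by blast
  ultimately show ?thesis
    unfolding Vdist_def by blast
qed

lemma Vdist_Suc_closed_nbr:
  assumes "simple_graph V E" and "u \<in> Vdist V E B (Suc i)" and "v = u \<or> E u v"
  shows "v \<in> Vdist V E B i"
  using assms(3) subsetD[OF Vdist_antimono[OF le_SucI[OF order.refl]] assms(2)]
    Vdist_Suc_nbr[OF assms(1,2)] by blast

lemma independent_Iset: "independent E (Iset V E B c)"
  unfolding independent_def Iset_def by auto

lemma non_maximal_extension:
  assumes "independent E I" and "\<not> maximal_independent_set E (S \<union> I) I"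
  obtains w where "w \<in> S" "w \<notin> I" "\<And>x. x \<in> I \<Longrightarrow> \<not> E w x"
proof -
  obtain J where "I \<subset> J" "J \<subseteq> S \<union> I" "independent E J"
    using assms unfolding maximal_independent_set_def by blast
  then obtain w where "w \<in> J" "w \<notin> I"
    by blast
  with \<open>I \<subset> J\<close> \<open>J \<subseteq> S \<union> I\<close> \<open>independent E J\<close> show ?thesis
    using that unfolding independent_def by blast
qed

lemma Candidacy_disabled_top_in_closed_nbr:
  assumes "degree_stabilized V E B c" and "u \<in> V - B" and "\<not> enabled E B c u Candidacy"
  obtains x where "x = u \<or> E u x" "sv c x"
proof -
  have "sv c u \<or> (\<exists>v. E u v \<and> sv c v)"
    using assms unfolding degree_stabilized_def enabled_def by auto
  then show ?thesis
    using that by blast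
qed

lemma step_enabled:
  "step V E B c T c' \<Longrightarrow> (u, r) \<in> T \<Longrightarrow> enabled E B c u r"
  unfolding step_def by blast

lemma step_unmoved:
  "step V E B c T c' \<Longrightarrow> \<forall>r. (u, r) \<notin> T \<Longrightarrow> sv c' u = sv c u \<and> xv c' u = xv c u"
  unfolding step_def by blast

lemma step_Refresh:
  "step V E B c T c' \<Longrightarrow> (u, Refresh) \<in> T \<Longrightarrow> xv c' u = deg E u \<and> sv c' u = sv c u"
  unfolding step_def by blast

lemma step_Candidacy:
  "step V E B c T c' \<Longrightarrow> (u, Candidacy) \<in> T \<Longrightarrow> xv c' u = xv c u"
  unfolding step_def by blast

lemma step_Withdrawal:
  "step V E B c T c' \<Longrightarrow> (u, Withdrawal) \<in> T \<Longrightarrow> xv c' u = xv c u \<and> \<not> sv c' u"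
  unfolding step_def by blast

lemma step_moves_non_Byzantine:
  assumes "step V E B c T c'" and "u \<notin> B"
  obtains "\<forall>r. (u, r) \<notin> T" | r where "(u, r) \<in> T" "r \<in> {Refresh, Candidacy, Withdrawal}"
proof (cases "\<exists>r. (u, r) \<in> T")
  case True
  then obtain r where r: "(u, r) \<in> T" by blast
  have "r \<noteq> ByzMove"
    using step_enabled[OF assms(1) r] assms(2) by (auto simp: enabled_def)
  then have "r \<in> {Refresh, Candidacy, Withdrawal}"
    by (cases r) simp_all
  with r show ?thesis
    by (rule that(2))
qed (use that(1) in blast)

lemma step_sv_raised:
  assumes "step V E B c T c'" and "u \<notin> B" and "\<not> sv c u" and "sv c' u"
  shows "(u, Candidacy) \<in> T \<and> enabled E B c u Candidacy"
proof -
  have "(u, Candidacy) \<in> T"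
    using assms(1,2)
  proof (cases rule: step_moves_non_Byzantine)
    case (2 r)
    have "r \<noteq> Withdrawal"
      using step_enabled[OF assms(1) 2(1)] assms(2,3) by (auto simp: enabled_def)
    with 2 show ?thesis
      using step_Refresh[OF assms(1)] assms(3,4) by auto
  qed (use step_unmoved[OF assms(1)] assms(3,4) in blast)
  then show ?thesis
    using step_enabled[OF assms(1)] by blast
qed

lemma step_sv_lowered:
  assumes "step V E B c T c'" and "u \<notin> B" and "sv c u" and "\<not> sv c' u"
  shows "(u, Withdrawal) \<in> T \<and> enabled E B c u Withdrawal"
proof -
  have "(u, Withdrawal) \<in> T"
    using assms(1,2)
  proof (cases rule: step_moves_non_Byzantine)
    case (2 r)
    have "r \<noteq> Candidacy"
      using step_enabled[OF assms(1) 2(1)] assms(2,3) by (auto simp: enabled_def)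
    with 2 show ?thesis
      using step_Refresh[OF assms(1)] assms(3,4) by auto
  qed (use step_unmoved[OF assms(1)] assms(3,4) in blast)
  then show ?thesis
    using step_enabled[OF assms(1)] by blast
qed

lemma step_keeps_degree:
  assumes "step V E B c T c'" and "u \<notin> B" and "xv c u = deg E u"
  shows "xv c' u = deg E u"
  using assms(1,2)
  by (cases rule: step_moves_non_Byzantine)
     (use assms(3) step_unmoved[OF assms(1)] step_Refresh[OF assms(1)]
        step_Candidacy[OF assms(1)] step_Withdrawal[OF assms(1)] in auto)

lemma step_degree_stabilized:
  "step V E B c T c' \<Longrightarrow> degree_stabilized V E B c \<Longrightarrow> degree_stabilized V E B c'"
  unfolding degree_stabilized_def by (metis DiffD2 step_keeps_degree)

lemma step_Iset_mono:
  assumes "simple_graph V E" and "step V E B c T c'"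
  shows "Iset V E B c \<subseteq> Iset V E B c'"
proof
  fix x assume "x \<in> Iset V E B c"
  then have x: "x \<in> Vdist V E B 1" "sv c x" "\<And>v. E x v \<Longrightarrow> \<not> sv c v"
    unfolding Iset_def by auto
  have "x \<notin> B"
    using x(1) by (rule Vdist_not_Byzantine)
  \<comment> \<open>\<open>x\<close> cannot withdraw (no \<open>\<top>\<close> neighbour) and a neighbour cannot candidate (\<open>x\<close> is \<open>\<top>\<close>)\<close>
  have "sv c' x"
    using step_sv_lowered[OF assms(2) \<open>x \<notin> B\<close> x(2)] x(3) \<open>x \<notin> B\<close> by (auto simp: enabled_def)
  moreover have "\<not> sv c' v" if "E x v" for v
  proof -
    have "v \<notin> B"
      using Vdist_not_Byzantine[OF Vdist_Suc_nbr[OF assms(1) x(1)[unfolded One_nat_def] that]] .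
    moreover have "E v x"
      using assms(1) that unfolding simple_graph_def by blast
    ultimately show ?thesis
      using step_sv_raised[OF assms(2) \<open>v \<notin> B\<close>] x(2,3) that by (auto simp: enabled_def)
  qed
  ultimately show "x \<in> Iset V E B c'"
    using x(1) unfolding Iset_def by auto
qed

lemma execution_degree_stabilized:
  assumes "\<forall>k<n. step V E B (c k) (T k) (c (Suc k))"
    and "degree_stabilized V E B (c 0)" and "i \<le> n"
  shows "degree_stabilized V E B (c i)"
  using assms(3)
proof (induction i)
  case (Suc i)
  then show ?case
    using assms(1) step_degree_stabilized by (metis Suc_le_lessD less_imp_le)
qed (use assms(2) in simp)

lemma execution_Iset_mono:
  assumes "simple_graph V E" and "\<forall>k<n. step V E B (c k) (T k) (c (Suc k))"
    and "i \<le> j" and "j \<le> n"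
  shows "Iset V E B (c i) \<subseteq> Iset V E B (c j)"
  using assms(3,4)
proof (induction j rule: dec_induct)
  case (step k)
  then have "Iset V E B (c i) \<subseteq> Iset V E B (c k)" and "step V E B (c k) (T k) (c (Suc k))"
    using assms(2) by simp_all
  then show ?case
    using step_Iset_mono[OF assms(1)] by blast
qed simp

lemma execution_sv_stays_bot:
  assumes "\<forall>k<n. step V E B (c k) (T k) (c (Suc k))"
    and "u \<notin> B" and "\<forall>k<n. (u, Candidacy) \<notin> T k"
    and "i \<le> j" and "j \<le> n" and "\<not> sv (c i) u"
  shows "\<not> sv (c j) u"
  using assms(4,5)
proof (induction j rule: dec_induct)
  case (step k)
  then show ?case
    using step_sv_raised[of V E B "c k" "T k" "c (Suc k)" u] assms(1-3) by auto
qed (use assms(6) in simp)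

lemma round_top_node_joins_Iset:
  assumes "\<forall>k<n. step V E B (c k) (T k) (c (Suc k))"
    and "round_complete V E B c T n"
    and "\<forall>i\<le>n. degree_stabilized V E B (c i)"
    and "x \<in> Vdist V E B 1" and "\<forall>i\<le>n. sv (c i) x"
  obtains i where "i \<le> n" "x \<in> Iset V E B (c i)"
proof -
  have x: "x \<in> V" "x \<notin> B"
    using subsetD[OF Vdist_subset assms(4)] by simp_all
  have deg: "xv (c i) x = deg E x" if "i \<le> n" for i
    using assms(3) that x unfolding degree_stabilized_def by blast
  have "\<not> (\<exists>i<n. \<exists>r. (x, r) \<in> T i)"
  proof
    assume "\<exists>i<n. \<exists>r. (x, r) \<in> T i"
    then obtain i r where i: "i < n" and r: "(x, r) \<in> T i" by blast
    have step: "step V E B (c i) (T i) (c (Suc i))"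
      using assms(1) i by blast
    have "r = Withdrawal"
      using step_enabled[OF step r] deg[of i] i x(2) assms(5)
      by (cases r) (simp_all add: enabled_def)
    then have "\<not> sv (c (Suc i)) x"
      using step_Withdrawal[OF step] r by simp
    then show False
      using assms(5) i by (simp add: Suc_leI)
  qed
  then obtain i where i: "i \<le> n" "\<not> activable E B (c i) x"
    using assms(2) x(1) unfolding round_complete_def by blast
  then have "\<not> enabled E B (c i) x Withdrawal"
    unfolding activable_def by blast
  then have "\<forall>v. E x v \<longrightarrow> \<not> sv (c i) v"
    using deg[OF i(1)] assms(5) i(1) x(2) by (simp add: enabled_def)
  then have "x \<in> Iset V E B (c i)"
    using assms(4,5) i(1) unfolding Iset_def by simp
  with i show ?thesis using that by blast
qed

theorem mainTheorem9:
  fixes V :: "'v set" and E :: "'v \<Rightarrow> 'v \<Rightarrow> bool" and B :: "'v set"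
    and c :: "nat \<Rightarrow> 'v config" and T :: "nat \<Rightarrow> ('v \<times> rule) set" and n :: nat
  assumes "simple_graph V E"
    and "B \<subseteq> V"
    and "\<forall>i<n. step V E B (c i) (T i) (c (Suc i))"
    and "first_round_ends_at V E B c T n"
    and "degree_stabilized V E B (c 0)"
    and "\<not> maximal_independent_set E (Vdist V E B 2 \<union> Iset V E B (c 0)) (Iset V E B (c 0))"
  shows "(\<exists>i<n. \<exists>u\<in>Vdist V E B 1. (u, Candidacy) \<in> T i)
       \<or> (\<exists>i\<le>n. Iset V E B (c 0) \<subset> Iset V E B (c i))
       \<or> (\<exists>i\<le>n. \<exists>u\<in>Vdist V E B 2. enabled E B (c i) u Candidacy)"
proof (rule ccontr)
  assume "\<not> ?thesis"
  then have no_cand: "\<forall>i<n. \<forall>u\<in>Vdist V E B 1. (u, Candidacy) \<notin> T i"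
    and I_not_grown: "\<forall>i\<le>n. \<not> Iset V E B (c 0) \<subset> Iset V E B (c i)"
    and not_enabled: "\<forall>u\<in>Vdist V E B 2. \<not> enabled E B (c n) u Candidacy"
    by blast+
  let ?I = "Iset V E B (c 0)"
  have stable: "\<forall>i\<le>n. degree_stabilized V E B (c i)"
    using execution_degree_stabilized[OF assms(3,5)] by blast
  have I_const: "Iset V E B (c i) = ?I" if "i \<le> n" for i
    using execution_Iset_mono[OF assms(1,3) _ that] I_not_grown that by blast
  obtain w where w: "w \<in> Vdist V E B 2" "w \<notin> ?I" "\<And>x. x \<in> ?I \<Longrightarrow> \<not> E w x"
    using non_maximal_extension[OF independent_Iset assms(6)] by blast
  have "degree_stabilized V E B (c n)" "w \<in> V - B" "\<not> enabled E B (c n) w Candidacy"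
    using stable subsetD[OF Vdist_subset w(1)] not_enabled w(1) by simp_all
  then obtain x where x: "x = w \<or> E w x" "sv (c n) x"
    by (rule Candidacy_disabled_top_in_closed_nbr)
  have "w \<in> Vdist V E B (Suc 1)"
    using w(1) by (simp add: numeral_2_eq_2)
  then have x1: "x \<in> Vdist V E B 1"
    by (rule Vdist_Suc_closed_nbr[OF assms(1) _ x(1)])
  have "sv (c i) x" if "i \<le> n" for i
    using execution_sv_stays_bot[OF assms(3) Vdist_not_Byzantine[OF x1] _ that order.refl]
      no_cand x1 x(2) by blast
  moreover have "round_complete V E B c T n"
    using assms(4) unfolding first_round_ends_at_def by blast
  ultimately obtain i where "i \<le> n" "x \<in> Iset V E B (c i)"
    using round_top_node_joins_Iset[OF assms(3) _ stable x1] by blast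
  then show False
    using I_const x(1) w(2,3) by blast
qed

end
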